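(* For every P/T net with silent moves $N=(S,A,T)$ and all markings $m_1,m_2$, if $m_1\approx_p m_2$ then $m_1\approx_{bri} m_2$.
   Context: A P/T net with silent moves is $N=(S,A,T)$: $S$ a finite set of places, $A$ a finite set of labels containing the silent label $\tau$, $T\subseteq(\mathcal{M}(S)\setminus\{\theta\})\times A\times\mathcal{M}(S)$ a finite set of transitions ($\mathcal{M}(S)$ the finite multisets over $S$, $\theta$ empty, $\oplus$ union, $\ominus$ truncated difference). For $t=(m,\ell,m')$: ${}^\bullet t=m$, $l(t)=\ell$, $t^\bullet=m'$. $m[t\rangle m'$ iff ${}^\bullet t\subseteq m$ and $m'=(m\ominus{}^\bullet t)\oplus t^\bullet$; firing sequences by concatenation; $o(\sigma)$ is the subsequence of non-$\tau$ labels of $\sigma$. Idling transitions: $i(s)=(s,\tau,s)$ for $s\in S$ (not in $T$, usable in silent sequences, firing by the same rule). A transition is $\tau$-sequential if $l(t)=\tau$ and $|{}^\bullet t|=|t^\bullet|=1$. Pre/post-sets of sequences: ${}^\bullet\epsilon=\theta$, ${}^\bullet(t\sigma)={}^\bullet t\oplus({}^\bullet\sigma\ominus t^\bullet)$, $\epsilon^\bullet=\theta$, $(t\sigma)^\bullet=\sigma^\bullet\oplus(t^\bullet\ominus{}^\bullet\sigma)$. A sequence $\sigma=t_1\dots t_n$ ($n\ge1$, $t_i$ in $T$ or idling) is $\tau$-1-sequential if each $t_i$ has label $\tau$ and singleton pre- and post-set and $t_i^\bullet={}^\bullet t_{i+1}$; $\sigma=\sigma_1\cdots\sigma_k$ is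 $\tau$-$k$-sequential if each $\sigma_i$ is $\tau$-1-sequential, ${}^\bullet\sigma=\bigoplus_i{}^\bullet\sigma_i$, $\sigma^\bullet=\bigoplus_i\sigma_i^\bullet$; $\sigma$ is $\tau$-sequential if $\tau$-$k$-sequential for some $k\ge1$. For $\tau$-sequential $\sigma=t_1\dots t_n$ with ${}^\bullet\sigma=m_0[t_1\rangle m_1\cdots[t_n\rangle m_n=\sigma^\bullet$ and a marking relation $Q$: $\Psi(m,\sigma,Q)$ iff $(m,m_i)\in Q$ for $i=0,\dots,n-1$; $\Phi(\sigma,m,Q)$ iff $(m_i,m)\in Q$ for $i=0,\dots,n-1$. Additive closure of $R\subseteq S\times S$: the least $R^\oplus$ with $(\theta,\theta)\in R^\oplus$ and, if $(s_1,s_2)\in R$, $(m_1,m_2)\in R^\oplus$, then $(s_1\oplus m_1,s_2\oplus m_2)\in R^\oplus$. A branching place bisimulation is $R\subseteq S\times S$ such that whenever $(m_1,m_2)\in R^\oplus$: (1) for every $t_1$ with $m_1[t_1\rangle m_1'$: (i) either $t_1$ is $\tau$-sequential and there are $\sigma,m_2'$ with $\sigma$ $\tau$-sequential, $m_2[\sigma\rangle m_2'$, $\Psi({}^\bullet t_1,\sigma,R^\oplus)$, $({}^\bullet t_1,\sigma^\bullet)\in R^\oplus$, $(t_1^\bullet,\sigma^\bullet)\in R^\oplus$, $(m_1\ominus{}^\bullet t_1,m_2\ominus{}^\bullet\sigma)\in R^\oplus$; (ii) or there are $\sigma,t_2,m,m_2'$ with $\sigma$ $\tau$-sequential, $m_2[\sigma\rangle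 m[t_2\rangle m_2'$, $\sigma^\bullet={}^\bullet t_2$, $l(t_1)=l(t_2)$, $\Psi({}^\bullet t_1,\sigma,R^\oplus)$, $({}^\bullet t_1,\sigma^\bullet)\in R^\oplus$, $(t_1^\bullet,t_2^\bullet)\in R^\oplus$, $(m_1\ominus{}^\bullet t_1,m_2\ominus{}^\bullet\sigma)\in R^\oplus$; (2) symmetrically for every $t_2$ with $m_2[t_2\rangle m_2'$ (matching sequence fired from $m_1$, $\Phi(\sigma,{}^\bullet t_2,R^\oplus)$ in place of $\Psi$, pairs with the $m_1$-side first). $m_1\approx_p m_2$ iff $(m_1,m_2)\in R^\oplus$ for some branching place bisimulation $R$. A branching interleaving bisimulation is $R'\subseteq\mathcal{M}(S)\times\mathcal{M}(S)$ such that whenever $(m_1,m_2)\in R'$: for every $t_1\in T$ with $m_1[t_1\rangle m_1'$, either $l(t_1)=\tau$ and there is a sequence $\sigma_2$ of transitions of $T$ with $o(\sigma_2)=\epsilon$, $m_2[\sigma_2\rangle m_2'$, $(m_1,m_2')\in R'$, $(m_1',m_2')\in R'$, or there are $\sigma,t_2$ with $o(\sigma)=\epsilon$, $l(t_1)=l(t_2)$, $m_2[\sigma\rangle m[t_2\rangle m_2'$, $(m_1,m)\in R'$, $(m_1',m_2')\in R'$; and symmetrically for $m_2$. $\approx_{bri}$ is the union of all branching interleaving bisimulations. *)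

theory Defs
  imports Main "HOL-Library.Multiset"
begin

type_synonym ('s,'a) trans = "'s multiset \<times> 'a \<times> 's multiset"

definition pre :: "('s,'a) trans \<Rightarrow> 's multiset" where "pre t = fst t"
definition lab :: "('s,'a) trans \<Rightarrow> 'a" where "lab t = fst (snd t)"
definition post :: "('s,'a) trans \<Rightarrow> 's multiset" where "post t = snd (snd t)"

definition pt_net :: "'s set \<Rightarrow> 'a set \<Rightarrow> ('s,'a) trans set \<Rightarrow> 'a \<Rightarrow> bool" where
  "pt_net S A T tau \<longleftrightarrow> finite S \<and> finite A \<and> tau \<in> A \<and> finite T \<and>
     (\<forall>(m,l,m') \<in> T. m \<noteq> {#} \<and> set_mset m \<subseteq> S \<and> l \<in> A \<and> set_mset m' \<subseteq> S)"

definition markings :: "'s set \<Rightarrow> 's multiset set" where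
  "markings S = {m. set_mset m \<subseteq> S}"

definition idle :: "'a \<Rightarrow> 's \<Rightarrow> ('s,'a) trans" where
  "idle tau s = ({#s#}, tau, {#s#})"

text \<open>Firing (multiset difference in HOL is truncated).\<close>
definition fires :: "'s multiset \<Rightarrow> ('s,'a) trans \<Rightarrow> 's multiset \<Rightarrow> bool" where
  "fires m t m' \<longleftrightarrow> pre t \<subseteq># m \<and> m' = (m - pre t) + post t"

fun fires_seq :: "'s multiset \<Rightarrow> ('s,'a) trans list \<Rightarrow> 's multiset \<Rightarrow> bool" where
  "fires_seq m [] m' \<longleftrightarrow> m' = m"
| "fires_seq m (t # ts) m'' \<longleftrightarrow> (\<exists>m'. fires m t m' \<and> fires_seq m' ts m'')"

fun pre_seq :: "('s,'a) trans list \<Rightarrow> 's multiset" where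
  "pre_seq [] = {#}"
| "pre_seq (t # ts) = pre t + (pre_seq ts - post t)"

fun post_seq :: "('s,'a) trans list \<Rightarrow> 's multiset" where
  "post_seq [] = {#}"
| "post_seq (t # ts) = post_seq ts + (post t - pre_seq ts)"

definition tau_seq_trans :: "'a \<Rightarrow> ('s,'a) trans \<Rightarrow> bool" where
  "tau_seq_trans tau t \<longleftrightarrow> lab t = tau \<and> size (pre t) = 1 \<and> size (post t) = 1"

definition tau_1_seq :: "('s,'a) trans set \<Rightarrow> 'a \<Rightarrow> ('s,'a) trans list \<Rightarrow> bool" where
  "tau_1_seq T tau \<sigma> \<longleftrightarrow> \<sigma> \<noteq> [] \<and>
     (\<forall>i < length \<sigma>. \<sigma> ! i \<in> T \<and> tau_seq_trans tau (\<sigma> ! i)) \<and>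
     (\<forall>i. Suc i < length \<sigma> \<longrightarrow> post (\<sigma> ! i) = pre (\<sigma> ! Suc i))"

definition tau_k_seq :: "'s set \<Rightarrow> ('s,'a) trans set \<Rightarrow> 'a \<Rightarrow> nat \<Rightarrow> ('s,'a) trans list \<Rightarrow> bool" where
  "tau_k_seq S T tau k \<sigma> \<longleftrightarrow> (\<exists>\<sigma>s. length \<sigma>s = k \<and> \<sigma> = concat \<sigma>s \<and>
     (\<forall>\<sigma>i \<in> set \<sigma>s. tau_1_seq (T \<union> idle tau ` S) tau \<sigma>i) \<and>
     pre_seq \<sigma> = (\<Sum>\<sigma>i \<leftarrow> \<sigma>s. pre_seq \<sigma>i) \<and>
     post_seq \<sigma> = (\<Sum>\<sigma>i \<leftarrow> \<sigma>s. post_seq \<sigma>i))"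

definition tau_sequential :: "'s set \<Rightarrow> ('s,'a) trans set \<Rightarrow> 'a \<Rightarrow> ('s,'a) trans list \<Rightarrow> bool" where
  "tau_sequential S T tau \<sigma> \<longleftrightarrow> (\<exists>k \<ge> 1. tau_k_seq S T tau k \<sigma>)"

fun marks :: "'s multiset \<Rightarrow> ('s,'a) trans list \<Rightarrow> 's multiset list" where
  "marks m [] = [m]"
| "marks m (t # ts) = m # marks ((m - pre t) + post t) ts"

definition Psi :: "'s multiset \<Rightarrow> ('s,'a) trans list \<Rightarrow> ('s multiset \<times> 's multiset) set \<Rightarrow> bool" where
  "Psi m \<sigma> Q \<longleftrightarrow> (\<forall>i < length \<sigma>. (m, marks (pre_seq \<sigma>) \<sigma> ! i) \<in> Q)"

definition Phi :: "('s,'a) trans list \<Rightarrow> 's multiset \<Rightarrow> ('s multiset \<times> 's multiset) set \<Rightarrow> bool" where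
  "Phi \<sigma> m Q \<longleftrightarrow> (\<forall>i < length \<sigma>. (marks (pre_seq \<sigma>) \<sigma> ! i, m) \<in> Q)"

inductive_set add_closure :: "('s \<times> 's) set \<Rightarrow> ('s multiset \<times> 's multiset) set"
  for R :: "('s \<times> 's) set" where
  empty: "({#}, {#}) \<in> add_closure R"
| add: "(s1, s2) \<in> R \<Longrightarrow> (m1, m2) \<in> add_closure R \<Longrightarrow>
        (add_mset s1 m1, add_mset s2 m2) \<in> add_closure R"

definition bpb :: "'s set \<Rightarrow> ('s,'a) trans set \<Rightarrow> 'a \<Rightarrow> ('s \<times> 's) set \<Rightarrow> bool" where
  "bpb S T tau R \<longleftrightarrow> R \<subseteq> S \<times> S \<and>
   (\<forall>(m1, m2) \<in> add_closure R.
     (\<forall>t1 \<in> T. \<forall>m1'. fires m1 t1 m1' \<longrightarrow>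
        (tau_seq_trans tau t1 \<and>
          (\<exists>\<sigma> m2'. tau_sequential S T tau \<sigma> \<and> fires_seq m2 \<sigma> m2' \<and>
             Psi (pre t1) \<sigma> (add_closure R) \<and>
             (pre t1, post_seq \<sigma>) \<in> add_closure R \<and>
             (post t1, post_seq \<sigma>) \<in> add_closure R \<and>
             (m1 - pre t1, m2 - pre_seq \<sigma>) \<in> add_closure R))
      \<or> (\<exists>\<sigma> t2 m m2'. t2 \<in> T \<and> tau_sequential S T tau \<sigma> \<and>
             fires_seq m2 \<sigma> m \<and> fires m t2 m2' \<and> post_seq \<sigma> = pre t2 \<and>
             lab t1 = lab t2 \<and>
             Psi (pre t1) \<sigma> (add_closure R) \<and>
             (pre t1, post_seq \<sigma>) \<in> add_closure R \<and>
             (post t1, post t2) \<in> add_closure R \<and>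
             (m1 - pre t1, m2 - pre_seq \<sigma>) \<in> add_closure R)) \<and>
     (\<forall>t2 \<in> T. \<forall>m2'. fires m2 t2 m2' \<longrightarrow>
        (tau_seq_trans tau t2 \<and>
          (\<exists>\<sigma> m1'. tau_sequential S T tau \<sigma> \<and> fires_seq m1 \<sigma> m1' \<and>
             Phi \<sigma> (pre t2) (add_closure R) \<and>
             (post_seq \<sigma>, pre t2) \<in> add_closure R \<and>
             (post_seq \<sigma>, post t2) \<in> add_closure R \<and>
             (m1 - pre_seq \<sigma>, m2 - pre t2) \<in> add_closure R))
      \<or> (\<exists>\<sigma> t1 m m1'. t1 \<in> T \<and> tau_sequential S T tau \<sigma> \<and>
             fires_seq m1 \<sigma> m \<and> fires m t1 m1' \<and> post_seq \<sigma> = pre t1 \<and>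
             lab t1 = lab t2 \<and>
             Phi \<sigma> (pre t2) (add_closure R) \<and>
             (post_seq \<sigma>, pre t2) \<in> add_closure R \<and>
             (post t1, post t2) \<in> add_closure R \<and>
             (m1 - pre_seq \<sigma>, m2 - pre t2) \<in> add_closure R)))"

definition bpb_equiv :: "'s set \<Rightarrow> ('s,'a) trans set \<Rightarrow> 'a \<Rightarrow> 's multiset \<Rightarrow> 's multiset \<Rightarrow> bool" where
  "bpb_equiv S T tau m1 m2 \<longleftrightarrow> (\<exists>R. bpb S T tau R \<and> (m1, m2) \<in> add_closure R)"

text \<open>Branching interleaving bisimulation.  A sequence \<sigma> of transitions of T has
 o(\<sigma>) = \<epsilon> iff all its labels are tau.\<close>
definition silent_seq :: "('s,'a) trans set \<Rightarrow> 'a \<Rightarrow> ('s,'a) trans list \<Rightarrow> bool" where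
  "silent_seq T tau \<sigma> \<longleftrightarrow> set \<sigma> \<subseteq> T \<and> (\<forall>t \<in> set \<sigma>. lab t = tau)"

definition bib :: "'s set \<Rightarrow> ('s,'a) trans set \<Rightarrow> 'a \<Rightarrow> ('s multiset \<times> 's multiset) set \<Rightarrow> bool" where
  "bib S T tau R' \<longleftrightarrow> R' \<subseteq> markings S \<times> markings S \<and>
   (\<forall>(m1, m2) \<in> R'.
     (\<forall>t1 \<in> T. \<forall>m1'. fires m1 t1 m1' \<longrightarrow>
        (lab t1 = tau \<and> (\<exists>\<sigma>2 m2'. silent_seq T tau \<sigma>2 \<and> fires_seq m2 \<sigma>2 m2' \<and>
             (m1, m2') \<in> R' \<and> (m1', m2') \<in> R'))
      \<or> (\<exists>\<sigma> t2 m m2'. silent_seq T tau \<sigma> \<and> t2 \<in> T \<and> lab t1 = lab t2 \<and>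
             fires_seq m2 \<sigma> m \<and> fires m t2 m2' \<and> (m1, m) \<in> R' \<and> (m1', m2') \<in> R')) \<and>
     (\<forall>t2 \<in> T. \<forall>m2'. fires m2 t2 m2' \<longrightarrow>
        (lab t2 = tau \<and> (\<exists>\<sigma>1 m1'. silent_seq T tau \<sigma>1 \<and> fires_seq m1 \<sigma>1 m1' \<and>
             (m1', m2) \<in> R' \<and> (m1', m2') \<in> R'))
      \<or> (\<exists>\<sigma> t1 m m1'. silent_seq T tau \<sigma> \<and> t1 \<in> T \<and> lab t1 = lab t2 \<and>
             fires_seq m1 \<sigma> m \<and> fires m t1 m1' \<and> (m, m2) \<in> R' \<and> (m1', m2') \<in> R')))"

definition bri_equiv :: "'s set \<Rightarrow> ('s,'a) trans set \<Rightarrow> 'a \<Rightarrow> 's multiset \<Rightarrow> 's multiset \<Rightarrow> bool" where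
  "bri_equiv S T tau m1 m2 \<longleftrightarrow> (\<exists>R'. bib S T tau R' \<and> (m1, m2) \<in> R')"

end

theory Submission
  imports Defs
begin

text \<open>The additive closure of a branching place bisimulation R is itself a branching
  interleaving bisimulation. A move t1 from m1 = (m1 - pre t1) + pre t1 is answered from m2
  by the place-bisimulation answer to t1 alone: the untouched parts m1 - pre t1 and
  m2 - pre_seq \<sigma> are related, the tau-sequential sequence \<sigma> with its idling steps erased is a
  silent sequence of the net, and adding the untouched parts to the related pre- and post-sets
  yields the required pairs of markings, by additivity.\<close>

definition additive :: "('s multiset \<times> 's multiset) set \<Rightarrow> bool" where
  "additive Q \<longleftrightarrow> (\<forall>(a, b) \<in> Q. \<forall>(c, d) \<in> Q. (a + c, b + d) \<in> Q)"

lemma additive_add_closure: "additive (add_closure R)"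
proof -
  have "(a + c, b + d) \<in> add_closure R"
    if "(a, b) \<in> add_closure R" "(c, d) \<in> add_closure R" for a b c d
    using that by (induction rule: add_closure.induct) (simp_all add: add_closure.add)
  then show ?thesis unfolding additive_def by blast
qed

lemma additiveD: "additive Q \<Longrightarrow> (a, b) \<in> Q \<Longrightarrow> (c, d) \<in> Q \<Longrightarrow> (a + c, b + d) \<in> Q"
  unfolding additive_def by blast

lemma additive_converse: "additive Q \<Longrightarrow> additive (Q\<inverse>)"
  unfolding additive_def by blast

lemma add_closure_subset_markings:
  assumes "R \<subseteq> S \<times> S"
  shows "add_closure R \<subseteq> markings S \<times> markings S"
proof -
  have "m1 \<in> markings S \<and> m2 \<in> markings S" if "(m1, m2) \<in> add_closure R" for m1 m2
    using that by (induction rule: add_closure.induct) (use assms in \<open>auto simp: markings_def\<close>)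
  then show ?thesis by auto
qed

lemma fires_seq_marking_equation:
  "fires_seq m \<sigma> m' \<Longrightarrow> pre_seq \<sigma> \<subseteq># m \<and> m' = m - pre_seq \<sigma> + post_seq \<sigma>"
proof (induction \<sigma> arbitrary: m)
  case (Cons t ts)
  then obtain m1 where "fires m t m1" "fires_seq m1 ts m'" by auto
  then have pre: "pre t \<subseteq># m" and m1: "m1 = m - pre t + post t"
    by (simp_all add: fires_def)
  from Cons.IH[OF \<open>fires_seq m1 ts m'\<close>]
  have pre_ts: "pre_seq ts \<subseteq># m1" and m': "m' = m1 - pre_seq ts + post_seq ts"
    by blast+
  have counts: "count (pre t) x \<le> count m x"
    "count (pre_seq ts) x \<le> count m x - count (pre t) x + count (post t) x"
    "count m' x = count m x - count (pre t) x + count (post t) x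
                      - count (pre_seq ts) x + count (post_seq ts) x" for x
    using pre pre_ts unfolding m' m1 by (metis count_diff count_union mset_subset_eq_count)+
  have "count (pre_seq (t # ts)) x \<le> count m x"
    "count m' x = count (m - pre_seq (t # ts) + post_seq (t # ts)) x" for x
    using counts[of x] by (simp_all only: pre_seq.simps post_seq.simps count_diff count_union)
  then show ?case
    unfolding subseteq_mset_def multiset_eq_iff by blast
qed simp

lemma fires_seq_filter:
  assumes "\<forall>t \<in> set \<sigma>. \<not> P t \<longrightarrow> pre t = post t" and "fires_seq m \<sigma> m'"
  shows "fires_seq m (filter P \<sigma>) m'"
  using assms
proof (induction \<sigma> arbitrary: m)
  case (Cons t ts)
  then obtain m1 where "fires m t m1" "fires_seq m1 ts m'" by auto
  moreover have "m1 = m" if "\<not> P t"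
    using that Cons.prems(1) \<open>fires m t m1\<close> by (auto simp: fires_def)
  ultimately show ?case using Cons by auto
qed simp

lemma tau_sequential_elem:
  assumes "tau_sequential S T tau \<sigma>" and "t \<in> set \<sigma>"
  shows "t \<in> T \<union> idle tau ` S \<and> lab t = tau"
proof -
  obtain \<sigma>s where "\<sigma> = concat \<sigma>s" "\<forall>\<sigma>i \<in> set \<sigma>s. tau_1_seq (T \<union> idle tau ` S) tau \<sigma>i"
    using assms(1) unfolding tau_sequential_def tau_k_seq_def by blast
  with assms(2) obtain \<sigma>i where "t \<in> set \<sigma>i" "tau_1_seq (T \<union> idle tau ` S) tau \<sigma>i"
    by auto
  moreover from \<open>t \<in> set \<sigma>i\<close> obtain i where "i < length \<sigma>i" "\<sigma>i ! i = t"
    by (auto simp: in_set_conv_nth)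
  ultimately show ?thesis
    by (auto simp: tau_1_seq_def tau_seq_trans_def)
qed

lemma idle_pre_eq_post: "t \<in> idle tau ` S \<Longrightarrow> pre t = post t"
  by (elim imageE) (simp add: idle_def pre_def post_def)

text \<open>Idling transitions do not change the marking, so erasing them from a tau-sequential
  sequence leaves a silent firing sequence of the net.\<close>
lemma tau_sequential_silent:
  assumes "tau_sequential S T tau \<sigma>" and "fires_seq m \<sigma> m'"
  obtains \<sigma>' where "silent_seq T tau \<sigma>'" and "fires_seq m \<sigma>' m'"
proof -
  have "silent_seq T tau (filter (\<lambda>t. t \<in> T) \<sigma>)"
    unfolding silent_seq_def set_filter using tau_sequential_elem[OF assms(1)] by blast
  moreover have "\<forall>t \<in> set \<sigma>. t \<notin> T \<longrightarrow> pre t = post t"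
  proof (intro ballI impI)
    fix t assume "t \<in> set \<sigma>" "t \<notin> T"
    with tau_sequential_elem[OF assms(1)] have "t \<in> idle tau ` S" by blast
    then show "pre t = post t" by (rule idle_pre_eq_post)
  qed
  then have "fires_seq m (filter (\<lambda>t. t \<in> T) \<sigma>) m'"
    using assms(2) by (rule fires_seq_filter)
  ultimately show thesis by (rule that)
qed

text \<open>The transfer condition of a branching place bisimulation for one move, with the
  relation on markings Q standing for the additive closure of R or its converse.\<close>
definition bpb_answer ::
  "'s set \<Rightarrow> ('s,'a) trans set \<Rightarrow> 'a \<Rightarrow> ('s multiset \<times> 's multiset) set \<Rightarrow>
   's multiset \<Rightarrow> 's multiset \<Rightarrow> ('s,'a) trans \<Rightarrow> bool"
  where "bpb_answer S T tau Q m1 m2 t1 \<longleftrightarrow>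
    (tau_seq_trans tau t1 \<and>
      (\<exists>\<sigma> m2'. tau_sequential S T tau \<sigma> \<and> fires_seq m2 \<sigma> m2' \<and>
         (pre t1, post_seq \<sigma>) \<in> Q \<and> (post t1, post_seq \<sigma>) \<in> Q \<and>
         (m1 - pre t1, m2 - pre_seq \<sigma>) \<in> Q))
  \<or> (\<exists>\<sigma> t2 m m2'. t2 \<in> T \<and> tau_sequential S T tau \<sigma> \<and>
         fires_seq m2 \<sigma> m \<and> fires m t2 m2' \<and> post_seq \<sigma> = pre t2 \<and> lab t1 = lab t2 \<and>
         (pre t1, post_seq \<sigma>) \<in> Q \<and> (post t1, post t2) \<in> Q \<and>
         (m1 - pre t1, m2 - pre_seq \<sigma>) \<in> Q)"

definition bib_answer ::
  "('s,'a) trans set \<Rightarrow> 'a \<Rightarrow> ('s multiset \<times> 's multiset) set \<Rightarrow>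
   's multiset \<Rightarrow> 's multiset \<Rightarrow> ('s,'a) trans \<Rightarrow> 's multiset \<Rightarrow> bool"
  where "bib_answer T tau Q m1 m2 t1 m1' \<longleftrightarrow>
    (lab t1 = tau \<and> (\<exists>\<sigma>2 m2'. silent_seq T tau \<sigma>2 \<and> fires_seq m2 \<sigma>2 m2' \<and>
         (m1, m2') \<in> Q \<and> (m1', m2') \<in> Q))
  \<or> (\<exists>\<sigma> t2 m m2'. silent_seq T tau \<sigma> \<and> t2 \<in> T \<and> lab t1 = lab t2 \<and>
         fires_seq m2 \<sigma> m \<and> fires m t2 m2' \<and> (m1, m) \<in> Q \<and> (m1', m2') \<in> Q)"

lemma bpb_answers:
  assumes "bpb S T tau R" and "(m1, m2) \<in> add_closure R"
  shows "t1 \<in> T \<Longrightarrow> fires m1 t1 m1' \<Longrightarrow> bpb_answer S T tau (add_closure R) m1 m2 t1"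
    and "t2 \<in> T \<Longrightarrow> fires m2 t2 m2' \<Longrightarrow> bpb_answer S T tau ((add_closure R)\<inverse>) m2 m1 t2"
proof -
  note transfer =
    assms(1)[unfolded bpb_def, THEN conjunct2, rule_format, OF assms(2), unfolded prod.case]
  show "bpb_answer S T tau (add_closure R) m1 m2 t1" if "t1 \<in> T" "fires m1 t1 m1'"
    using transfer[THEN conjunct1, rule_format, OF that] unfolding bpb_answer_def by blast
  show "bpb_answer S T tau ((add_closure R)\<inverse>) m2 m1 t2" if "t2 \<in> T" "fires m2 t2 m2'"
    using transfer[THEN conjunct2, rule_format, OF that]
    unfolding bpb_answer_def converse_iff eq_commute[of "lab t2"] by blast
qed

lemma bib_iff_answers:
  "bib S T tau Q \<longleftrightarrow> Q \<subseteq> markings S \<times> markings S \<and>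
    (\<forall>(m1, m2) \<in> Q.
      (\<forall>t1 \<in> T. \<forall>m1'. fires m1 t1 m1' \<longrightarrow> bib_answer T tau Q m1 m2 t1 m1') \<and>
      (\<forall>t2 \<in> T. \<forall>m2'. fires m2 t2 m2' \<longrightarrow> bib_answer T tau (Q\<inverse>) m2 m1 t2 m2'))"
  by (simp add: bib_def bib_answer_def eq_commute)

lemma bib_answer_if_bpb_answer:
  assumes "additive Q" and "fires m1 t1 m1'" and "bpb_answer S T tau Q m1 m2 t1"
  shows "bib_answer T tau Q m1 m2 t1 m1'"
proof -
  define rest where "rest = m1 - pre t1"
  have m1: "m1 = rest + pre t1" and m1': "m1' = rest + post t1"
    using assms(2) by (auto simp: rest_def fires_def)
  consider
      (silent) \<sigma> m2' where "tau_seq_trans tau t1" "tau_sequential S T tau \<sigma>" "fires_seq m2 \<sigma> m2'"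
        "(pre t1, post_seq \<sigma>) \<in> Q" "(post t1, post_seq \<sigma>) \<in> Q" "(rest, m2 - pre_seq \<sigma>) \<in> Q"
    | (visible) \<sigma> t2 m m2' where "t2 \<in> T" "tau_sequential S T tau \<sigma>" "fires_seq m2 \<sigma> m"
        "fires m t2 m2'" "post_seq \<sigma> = pre t2" "lab t1 = lab t2"
        "(pre t1, post_seq \<sigma>) \<in> Q" "(post t1, post t2) \<in> Q" "(rest, m2 - pre_seq \<sigma>) \<in> Q"
    using assms(3) unfolding bpb_answer_def rest_def by blast
  then show ?thesis
  proof cases
    case silent
    then have m2': "m2' = (m2 - pre_seq \<sigma>) + post_seq \<sigma>"
      using fires_seq_marking_equation by blast
    obtain \<sigma>' where "silent_seq T tau \<sigma>'" "fires_seq m2 \<sigma>' m2'"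
      using silent(2,3) by (rule tau_sequential_silent)
    moreover have "(m1, m2') \<in> Q" and "(m1', m2') \<in> Q"
      unfolding m1 m1' m2' using additiveD[OF assms(1)] silent(4-6) by blast+
    moreover have "lab t1 = tau"
      using silent(1) by (simp add: tau_seq_trans_def)
    ultimately show ?thesis
      unfolding bib_answer_def by blast
  next
    case visible
    then have m: "m = (m2 - pre_seq \<sigma>) + post_seq \<sigma>"
      using fires_seq_marking_equation by blast
    with visible(4,5) have m2': "m2' = (m2 - pre_seq \<sigma>) + post t2"
      by (simp add: fires_def)
    obtain \<sigma>' where "silent_seq T tau \<sigma>'" "fires_seq m2 \<sigma>' m"
      using visible(2,3) by (rule tau_sequential_silent)
    moreover have "(m1, m) \<in> Q" and "(m1', m2') \<in> Q"
      unfolding m1 m1' m m2' using additiveD[OF assms(1)] visible(7-9) by blast+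
    ultimately show ?thesis
      unfolding bib_answer_def using visible(1,4,6) by blast
  qed
qed

lemma bib_add_closure:
  assumes "bpb S T tau R"
  shows "bib S T tau (add_closure R)"
proof -
  have "R \<subseteq> S \<times> S"
    using assms by (simp add: bpb_def)
  moreover have "bib_answer T tau (add_closure R) m1 m2 t1 m1'"
    if "(m1, m2) \<in> add_closure R" "t1 \<in> T" "fires m1 t1 m1'" for m1 m2 t1 m1'
    using additive_add_closure \<open>fires m1 t1 m1'\<close> bpb_answers(1)[OF assms that]
    by (rule bib_answer_if_bpb_answer)
  moreover have "bib_answer T tau ((add_closure R)\<inverse>) m2 m1 t2 m2'"
    if "(m1, m2) \<in> add_closure R" "t2 \<in> T" "fires m2 t2 m2'" for m1 m2 t2 m2'
    using additive_converse[OF additive_add_closure] \<open>fires m2 t2 m2'\<close>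
      bpb_answers(2)[OF assms that]
    by (rule bib_answer_if_bpb_answer)
  ultimately show ?thesis
    unfolding bib_iff_answers using add_closure_subset_markings by blast
qed

theorem mainTheorem8:
  fixes S :: "'s set" and A :: "'a set" and T :: "('s,'a) trans set" and tau :: 'a
    and m1 m2 :: "'s multiset"
  assumes "pt_net S A T tau"
    and "m1 \<in> markings S" and "m2 \<in> markings S"
    and "bpb_equiv S T tau m1 m2"
  shows "bri_equiv S T tau m1 m2"
proof -
  from assms(4) obtain R where "bpb S T tau R" and "(m1, m2) \<in> add_closure R"
    unfolding bpb_equiv_def by blast
  then show ?thesis
    unfolding bri_equiv_def by (blast intro: bib_add_closure)
qed

end
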